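(* In the setting of the context (QFSR scheme: quadratic flux reconstruction in the solution), let $\mathcal{E}_j=(\Phi_{j+1/2}-\Phi_{j-1/2})/h$ evaluated on exact nodal values. If $\kappa_3=0$, then as $h\to0$ with derivatives at $x_j$, $$\mathcal{E}_j=\frac{\partial f}{\partial x}+\frac14\left[\Big(\kappa-\frac13\Big)\frac{\partial f}{\partial u}\frac{\partial^3u}{\partial x^3}+(\kappa+\theta_2-1)\frac{\partial^2 f}{\partial u^2}\frac{\partial u}{\partial x}\frac{\partial^2u}{\partial x^2}+\frac12\Big(\theta_2-\frac23\Big)\frac{\partial^3 f}{\partial u^3}\Big(\frac{\partial u}{\partial x}\Big)^3\right]h^2-\frac{\kappa-1}{8}\left[\frac{\partial D}{\partial x}\frac{\partial^3 u}{\partial x^3}+D(u(x_j))\frac{\partial^4 u}{\partial x^4}\right]h^3+O(h^4),$$ where $f$ denotes $f(u(x))$, $f$-derivatives in $u$ are evaluated at $u(x_j)$, and $\partial D/\partial x=\frac{d}{dx}D(u(x))$. In particular, $\kappa=1/3$ and $\theta_2=2/3$ give third-order accuracy.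
   Context: Let $h>0$, uniform grid $x_i=ih$, $i\in\mathbb{Z}$. Let $u$ be a smooth real function of $x$, $u_i=u(x_i)$; let $f$ (flux) and $D$ (dissipation coefficient) be smooth real functions of one variable. Define successive central differences $(u_x)_i=(u_{i+1}-u_{i-1})/(2h)$, $(u_{xx})_i=((u_x)_{i+1}-(u_x)_{i-1})/(2h)$. For the face $i+1/2$ with $j=i$, $k=i+1$, let $T_j=\frac h4((u_x)_k-(u_x)_j)-\frac{h^2}{4}(u_{xx})_j$, $T_k=\frac h4((u_x)_k-(u_x)_j)-\frac{h^2}{4}(u_{xx})_k$, and reconstructed states (parameters $\kappa,\kappa_3$) $u_L=\kappa\frac{u_j+u_k}{2}+(1-\kappa)[u_j+\frac h2(u_x)_j]+\kappa_3T_j$, $u_R=\kappa\frac{u_j+u_k}{2}+(1-\kappa)[u_k-\frac h2(u_x)_k]+\kappa_3T_k$. With $\Delta_L=u_L-u_j$, $\Delta_R=u_R-u_k$ and parameter $\theta_2$, the reconstructed fluxes are $f_L=f(u_j)+f'(u_j)\Delta_L+\frac{\theta_2}{2}f''(u_j)\Delta_L^2$ and $f_R=f(u_k)+f'(u_k)\Delta_R+\frac{\theta_2}{2}f''(u_k)\Delta_R^2$. Numerical flux: $\Phi_{i+1/2}=\frac12(f_L+f_R)-\frac12D_{i+1/2}(u_R-u_L)$, with $D_{i+1/2}=\bar D(u_i,u_{i+1})$ for a smooth symmetric $\bar D$ with $\bar D(v,v)=D(v)$. *)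

theory Defs
  imports "HOL-Analysis.Analysis" "HOL-Library.Landau_Symbols"
begin

fun Ck :: "nat \<Rightarrow> ('a::real_normed_vector \<Rightarrow> real) \<Rightarrow> bool" where
  "Ck 0 g = continuous_on UNIV g"
| "Ck (Suc k) g = (\<exists>g'. (\<forall>x. (g has_derivative g' x) (at x)) \<and> (\<forall>v. Ck k (\<lambda>x. g' x v)))"

definition smooth_fun :: "('a::real_normed_vector \<Rightarrow> real) \<Rightarrow> bool" where
  "smooth_fun g = (\<forall>k. Ck k g)"

definition cdx :: "real \<Rightarrow> (real \<Rightarrow> real) \<Rightarrow> real \<Rightarrow> real" where
  "cdx h u y = (u (y + h) - u (y - h)) / (2 * h)"

definition cdxx :: "real \<Rightarrow> (real \<Rightarrow> real) \<Rightarrow> real \<Rightarrow> real" where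
  "cdxx h u y = (cdx h u (y + h) - cdx h u (y - h)) / (2 * h)"

text \<open>QFSR numerical flux at the face between nodes y (= x_j) and y + h (= x_k).\<close>
definition qfsr_flux ::
  "real \<Rightarrow> real \<Rightarrow> real \<Rightarrow> (real \<Rightarrow> real) \<Rightarrow> (real \<times> real \<Rightarrow> real)
    \<Rightarrow> real \<Rightarrow> (real \<Rightarrow> real) \<Rightarrow> real \<Rightarrow> real" where
  "qfsr_flux \<kappa> \<kappa>3 \<theta>2 f Dbar h u y =
    (let uj = u y; uk = u (y + h);
         Tj = h / 4 * (cdx h u (y + h) - cdx h u y) - h^2 / 4 * cdxx h u y;
         Tk = h / 4 * (cdx h u (y + h) - cdx h u y) - h^2 / 4 * cdxx h u (y + h);
         uL = \<kappa> * (uj + uk) / 2 + (1 - \<kappa>) * (uj + h / 2 * cdx h u y) + \<kappa>3 * Tj;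
         uR = \<kappa> * (uj + uk) / 2 + (1 - \<kappa>) * (uk - h / 2 * cdx h u (y + h)) + \<kappa>3 * Tk;
         dL = uL - uj; dR = uR - uk;
         fL = f uj + deriv f uj * dL + \<theta>2 / 2 * deriv (deriv f) uj * dL^2;
         fR = f uk + deriv f uk * dR + \<theta>2 / 2 * deriv (deriv f) uk * dR^2
     in (fL + fR) / 2 - Dbar (uj, uk) / 2 * (uR - uL))"

text \<open>Truncation error E_j at node x (faces x +- h/2).\<close>
definition qfsr_err ::
  "real \<Rightarrow> real \<Rightarrow> real \<Rightarrow> (real \<Rightarrow> real) \<Rightarrow> (real \<times> real \<Rightarrow> real)
    \<Rightarrow> (real \<Rightarrow> real) \<Rightarrow> real \<Rightarrow> real \<Rightarrow> real" where
  "qfsr_err \<kappa> \<kappa>3 \<theta>2 f Dbar u x h =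
    (qfsr_flux \<kappa> \<kappa>3 \<theta>2 f Dbar h u x - qfsr_flux \<kappa> \<kappa>3 \<theta>2 f Dbar h u (x - h)) / h"

end

(*
  The kappa-reconstruction and the symmetric dissipation coefficient are mirror symmetric:
  the flux at x_{j-1/2} is the flux at x_{j+1/2} with h replaced by -h, except that the
  dissipation term changes sign.  With A(h) the central part (f_L + f_R)/2 and P(h) the
  dissipation Dbar(u_j, u_k) (u_R - u_L) at the face x_{j+1/2}, this gives

    h E_j = A(h) - A(-h) - (P(h) + P(-h)) / 2,

  so only odd Taylor coefficients of A and even ones of P enter.  As u_R - u_L = O(h^3),
  P vanishes with its second derivative at 0, and
  E_j = 2 A'(0) + A'''(0)/3 h^2 - P''''(0)/24 h^3 + O(h^4).  These derivatives are computed
  symbolically; the symmetry of Dbar makes the h-derivative of Dbar(u_j, u(x_j + h)) at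
  h = 0 half of the x-derivative of D(u(x)).
*)

theory Submission
  imports Defs "HOL-Real_Asymp.Real_Asymp"
begin

section \<open>Smooth real functions\<close>

fun differentiable_times :: "nat \<Rightarrow> (real \<Rightarrow> real) \<Rightarrow> bool" where
  "differentiable_times 0 g = True"
| "differentiable_times (Suc n) g \<longleftrightarrow>
     (\<forall>x. (g has_real_derivative deriv g x) (at x)) \<and> differentiable_times n (deriv g)"

definition real_smooth :: "(real \<Rightarrow> real) \<Rightarrow> bool" where
  "real_smooth g \<longleftrightarrow> (\<forall>n. differentiable_times n g)"

lemma differentiable_times_SucI:
  assumes "\<And>x. (g has_real_derivative g' x) (at x)" and "differentiable_times n g'"
  shows "differentiable_times (Suc n) g"
proof -
  have "deriv g = g'"
    using assms(1) by (intro ext DERIV_imp_deriv)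
  with assms show ?thesis by simp
qed

lemma differentiable_times_Suc_imp: "differentiable_times (Suc n) g \<Longrightarrow> differentiable_times n g"
  by (induction n arbitrary: g) auto

lemma differentiable_times_const: "differentiable_times n (\<lambda>t. c)"
proof (induction n arbitrary: c)
  case (Suc n)
  show ?case
    by (rule differentiable_times_SucI[where g' = "\<lambda>_. 0"]) (simp_all add: Suc)
qed simp

lemma differentiable_times_add:
  "differentiable_times n A \<Longrightarrow> differentiable_times n B \<Longrightarrow> differentiable_times n (\<lambda>t. A t + B t)"
proof (induction n arbitrary: A B)
  case (Suc n)
  show ?case
  proof (rule differentiable_times_SucI)
    show "((\<lambda>t. A t + B t) has_real_derivative deriv A x + deriv B x) (at x)" for x
      using Suc.prems by (auto intro: DERIV_add)
    show "differentiable_times n (\<lambda>x. deriv A x + deriv B x)"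
      using Suc by simp
  qed
qed simp

lemma differentiable_times_mult:
  "differentiable_times n A \<Longrightarrow> differentiable_times n B \<Longrightarrow> differentiable_times n (\<lambda>t. A t * B t)"
proof (induction n arbitrary: A B)
  case (Suc n)
  show ?case
  proof (rule differentiable_times_SucI)
    show "((\<lambda>t. A t * B t) has_real_derivative deriv A x * B x + A x * deriv B x) (at x)" for x
      using Suc.prems by (auto intro!: derivative_eq_intros)
    show "differentiable_times n (\<lambda>x. deriv A x * B x + A x * deriv B x)"
      using Suc differentiable_times_Suc_imp by (auto intro: differentiable_times_add)
  qed
qed simp

lemma differentiable_times_comp:
  "differentiable_times n G \<Longrightarrow> differentiable_times n W \<Longrightarrow> differentiable_times n (\<lambda>t. G (W t))"
proof (induction n arbitrary: G W)
  case (Suc n)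
  show ?case
  proof (rule differentiable_times_SucI)
    show "((\<lambda>t. G (W t)) has_real_derivative deriv G (W x) * deriv W x) (at x)" for x
      using Suc.prems by (auto intro: DERIV_chain2)
    show "differentiable_times n (\<lambda>x. deriv G (W x) * deriv W x)"
      using Suc differentiable_times_Suc_imp by (auto intro: differentiable_times_mult)
  qed
qed simp

lemma real_smooth_const [simp]: "real_smooth (\<lambda>t. c)"
  by (simp add: real_smooth_def differentiable_times_const)

lemma real_smooth_ident [simp]: "real_smooth (\<lambda>t. t)"
proof -
  have "differentiable_times (Suc n) (\<lambda>t. t)" for n
    by (rule differentiable_times_SucI[where g' = "\<lambda>_. 1"]) (simp_all add: differentiable_times_const)
  then show ?thesis
    unfolding real_smooth_def by (metis differentiable_times_Suc_imp)
qed

lemma real_smooth_add [simp]: "real_smooth A \<Longrightarrow> real_smooth B \<Longrightarrow> real_smooth (\<lambda>t. A t + B t)"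
  by (simp add: real_smooth_def differentiable_times_add)

lemma real_smooth_mult [simp]: "real_smooth A \<Longrightarrow> real_smooth B \<Longrightarrow> real_smooth (\<lambda>t. A t * B t)"
  by (simp add: real_smooth_def differentiable_times_mult)

lemma real_smooth_comp: "real_smooth G \<Longrightarrow> real_smooth W \<Longrightarrow> real_smooth (\<lambda>t. G (W t))"
  by (simp add: real_smooth_def differentiable_times_comp)

lemma real_smooth_diff [simp]: "real_smooth A \<Longrightarrow> real_smooth B \<Longrightarrow> real_smooth (\<lambda>t. A t - B t)"
  using real_smooth_add[of A "\<lambda>t. -1 * B t"] real_smooth_mult[of "\<lambda>_. -1" B] by simp

lemma real_smooth_minus [simp]: "real_smooth A \<Longrightarrow> real_smooth (\<lambda>t. - A t)"
  using real_smooth_diff[of "\<lambda>_. 0" A] by simp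

lemma real_smooth_divide_const [simp]: "real_smooth A \<Longrightarrow> real_smooth (\<lambda>t. A t / c)"
  using real_smooth_mult[of A "\<lambda>_. 1 / c"] by simp

lemma real_smooth_deriv [simp]: "real_smooth G \<Longrightarrow> real_smooth (deriv G)"
  unfolding real_smooth_def by (metis differentiable_times.simps(2))

lemma real_smooth_DERIV: "real_smooth G \<Longrightarrow> (G has_real_derivative deriv G x) (at x)"
  unfolding real_smooth_def by (metis differentiable_times.simps(2))

lemma real_smooth_higher_deriv: "real_smooth G \<Longrightarrow> real_smooth ((deriv ^^ n) G)"
  by (induction n) auto

lemma real_smooth_DERIV_higher:
  "real_smooth G \<Longrightarrow> ((deriv ^^ n) G has_real_derivative (deriv ^^ Suc n) G x) (at x)"
  using real_smooth_DERIV[OF real_smooth_higher_deriv] by simp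

lemma has_real_derivative_of_linear:
  assumes "(g has_derivative L) (at x)"
  shows "(g has_real_derivative L 1) (at x)"
proof (rule has_derivative_imp_has_field_derivative[OF assms])
  show "s * L 1 = L s" for s
    using linear_scale[OF has_derivative_linear[OF assms], of s 1] by simp
qed

lemma linear_real_pair:
  assumes "linear (L :: real \<times> real \<Rightarrow> real)"
  shows "L (p, q) = p * L (1, 0) + q * L (0, 1)"
proof -
  have "L (p, q) = L (p *\<^sub>R (1, 0) + q *\<^sub>R (0, 1))"
    by simp
  also have "\<dots> = p * L (1, 0) + q * L (0, 1)"
    by (simp only: linear_add[OF assms] linear_scale[OF assms] real_scaleR_def)
  finally show ?thesis .
qed

lemma has_real_derivative_pair_comp:
  assumes "(G has_derivative L) (at (w1 t, w2 t))"
    and "(w1 has_real_derivative a) (at t)" and "(w2 has_real_derivative b) (at t)"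
  shows "((\<lambda>t. G (w1 t, w2 t)) has_real_derivative a * L (1, 0) + b * L (0, 1)) (at t)"
proof -
  have "((\<lambda>t. (w1 t, w2 t)) has_derivative (\<lambda>s. (a * s, b * s))) (at t)"
    using assms(2,3) unfolding has_field_derivative_def by (intro has_derivative_Pair)
  from has_derivative_compose[OF this assms(1)]
  have comp: "((\<lambda>t. G (w1 t, w2 t)) has_derivative (\<lambda>s. L (a * s, b * s))) (at t)" .
  have "L (a * s, b * s) = s * (a * L (1, 0) + b * L (0, 1))" for s
    using linear_real_pair[OF has_derivative_linear[OF assms(1)], of "a * s" "b * s"]
    by (simp add: algebra_simps)
  then show ?thesis
    by (intro has_derivative_imp_has_field_derivative[OF comp]) simp
qed

lemma Ck_imp_differentiable_times: "Ck k (g :: real \<Rightarrow> real) \<Longrightarrow> differentiable_times k g"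
proof (induction k arbitrary: g)
  case (Suc k)
  then obtain g' where "\<And>x. (g has_derivative g' x) (at x)" and "Ck k (\<lambda>x. g' x 1)"
    by auto
  with Suc.IH show ?case
    by (intro differentiable_times_SucI[where g' = "\<lambda>x. g' x 1"] has_real_derivative_of_linear)
qed simp

lemma smooth_fun_imp_real_smooth: "smooth_fun (g :: real \<Rightarrow> real) \<Longrightarrow> real_smooth g"
  unfolding smooth_fun_def real_smooth_def using Ck_imp_differentiable_times by blast

lemma Ck_pair_comp:
  assumes "Ck k (G :: real \<times> real \<Rightarrow> real)" and "real_smooth w1" and "real_smooth w2"
  shows "differentiable_times k (\<lambda>t. G (w1 t, w2 t))"
  using assms(1)
proof (induction k arbitrary: G)
  case (Suc k)
  then obtain G' where G': "\<And>p. (G has_derivative G' p) (at p)" and "\<And>v. Ck k (\<lambda>p. G' p v)"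
    by auto
  with Suc.IH have partials: "differentiable_times k (\<lambda>t. G' (w1 t, w2 t) v)" for v
    by blast
  have slopes: "differentiable_times k (deriv w1)" "differentiable_times k (deriv w2)"
    using assms(2,3) real_smooth_deriv unfolding real_smooth_def by blast+
  show ?case
  proof (rule differentiable_times_SucI)
    show "((\<lambda>t. G (w1 t, w2 t)) has_real_derivative
        deriv w1 t * G' (w1 t, w2 t) (1, 0) + deriv w2 t * G' (w1 t, w2 t) (0, 1)) (at t)" for t
      using G' assms(2,3) by (intro has_real_derivative_pair_comp real_smooth_DERIV)
    show "differentiable_times k
        (\<lambda>t. deriv w1 t * G' (w1 t, w2 t) (1, 0) + deriv w2 t * G' (w1 t, w2 t) (0, 1))"
      using partials slopes by (intro differentiable_times_add differentiable_times_mult)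
  qed
qed simp

lemma smooth_fun_pair_comp:
  "smooth_fun (G :: real \<times> real \<Rightarrow> real) \<Longrightarrow> real_smooth w1 \<Longrightarrow> real_smooth w2
    \<Longrightarrow> real_smooth (\<lambda>t. G (w1 t, w2 t))"
  unfolding smooth_fun_def using Ck_pair_comp by (simp add: real_smooth_def)

section \<open>Symbolic differentiation\<close>

lemma deriv_add_smooth:
  "real_smooth A \<Longrightarrow> real_smooth B \<Longrightarrow> deriv (\<lambda>t. A t + B t) = (\<lambda>t. deriv A t + deriv B t)"
  by (intro ext DERIV_imp_deriv DERIV_add real_smooth_DERIV)

lemma deriv_diff_smooth:
  "real_smooth A \<Longrightarrow> real_smooth B \<Longrightarrow> deriv (\<lambda>t. A t - B t) = (\<lambda>t. deriv A t - deriv B t)"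
  by (intro ext DERIV_imp_deriv DERIV_diff real_smooth_DERIV)

lemma deriv_mult_smooth:
  "real_smooth A \<Longrightarrow> real_smooth B
    \<Longrightarrow> deriv (\<lambda>t. A t * B t) = (\<lambda>t. deriv A t * B t + A t * deriv B t)"
  by (intro ext DERIV_imp_deriv) (auto intro!: derivative_eq_intros real_smooth_DERIV)

lemma deriv_minus_smooth: "real_smooth A \<Longrightarrow> deriv (\<lambda>t. - A t) = (\<lambda>t. - deriv A t)"
  by (intro ext DERIV_imp_deriv DERIV_minus real_smooth_DERIV)

lemma deriv_divide_const_smooth:
  assumes "real_smooth A"
  shows "deriv (\<lambda>t. A t / c) = (\<lambda>t. deriv A t / c)"
proof (cases "c = 0")
  case False
  with assms show ?thesis
    by (intro ext DERIV_imp_deriv) (auto intro!: derivative_eq_intros real_smooth_DERIV)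
qed simp

text \<open>Keeping stencil values folded as \<open>node\<close> lets the simplifier differentiate them in the
  mesh size \<open>h\<close>.\<close>

definition node :: "(real \<Rightarrow> real) \<Rightarrow> real \<Rightarrow> real \<Rightarrow> real \<Rightarrow> real" where
  "node u x c h = u (x + c * h)"

lemma node_0 [simp]: "node u x c 0 = u x"
  by (simp add: node_def)

lemma real_smooth_node [simp]: "real_smooth u \<Longrightarrow> real_smooth (node u x c)"
  using real_smooth_comp[of u "\<lambda>h. x + c * h"] by (simp add: node_def[abs_def])

lemma real_smooth_comp_node [simp]:
  "real_smooth F \<Longrightarrow> real_smooth u \<Longrightarrow> real_smooth (\<lambda>h. F (node u x c h))"
  by (simp add: real_smooth_comp)

lemma DERIV_node:
  assumes "real_smooth u"
  shows "(node u x c has_real_derivative c * node (deriv u) x c h) (at h)"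
proof -
  have "((\<lambda>h. u (x + c * h)) has_real_derivative deriv u (x + c * h) * c) (at h)"
    by (rule DERIV_chain2[OF real_smooth_DERIV[OF assms]]) (auto intro!: derivative_eq_intros)
  then show ?thesis
    by (simp add: node_def[abs_def] mult.commute)
qed

lemma deriv_node: "real_smooth u \<Longrightarrow> deriv (node u x c) = (\<lambda>h. c * node (deriv u) x c h)"
  by (intro ext DERIV_imp_deriv DERIV_node)

lemma deriv_comp_node:
  "real_smooth F \<Longrightarrow> real_smooth u
    \<Longrightarrow> deriv (\<lambda>h. F (node u x c h)) = (\<lambda>h. deriv F (node u x c h) * (c * node (deriv u) x c h))"
  by (intro ext DERIV_imp_deriv DERIV_chain2[where f = F] real_smooth_DERIV DERIV_node)

lemmas deriv_smooth_simps = deriv_add_smooth deriv_diff_smooth deriv_mult_smooth deriv_minus_smooth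
  deriv_divide_const_smooth deriv_node deriv_comp_node

section \<open>Taylor expansions in Landau form\<close>

lemma real_smooth_taylor_bigo:
  assumes "real_smooth G"
  shows "(\<lambda>h. G h - (\<Sum>m<n. (deriv ^^ m) G 0 / fact m * h ^ m)) \<in> O[at 0](\<lambda>h. h ^ n)"
proof -
  have "continuous_on (cball 0 1) ((deriv ^^ n) G)"
    using real_smooth_DERIV_higher[OF assms]
    by (meson DERIV_continuous continuous_at_imp_continuous_on)
  then have "compact ((deriv ^^ n) G ` cball 0 1)"
    by (rule compact_continuous_image[OF _ compact_cball])
  then obtain B where B: "\<And>y. y \<in> cball 0 1 \<Longrightarrow> \<bar>(deriv ^^ n) G y\<bar> \<le> B"
    using compact_imp_bounded bounded_iff by (metis image_eqI real_norm_def)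
  have remainder: "norm (G h - (\<Sum>m<n. (deriv ^^ m) G 0 / fact m * h ^ m)) \<le> B / fact n * norm (h ^ n)"
    if "\<bar>h\<bar> < 1" for h
  proof -
    obtain t where t: "\<bar>t\<bar> \<le> \<bar>h\<bar>"
      "G h = (\<Sum>m<n. (deriv ^^ m) G 0 / fact m * h ^ m) + (deriv ^^ n) G t / fact n * h ^ n"
      using Maclaurin_all_le[where diff = "\<lambda>m. (deriv ^^ m) G" and f = G and x = h and n = n]
        real_smooth_DERIV_higher[OF assms] by auto
    have "\<bar>(deriv ^^ n) G t\<bar> \<le> B"
      using B t(1) that by auto
    then show ?thesis
      using t(2) by (simp add: abs_mult divide_right_mono mult_right_mono)
  qed
  have "\<forall>\<^sub>F h in at 0. \<bar>h\<bar> < (1 :: real)"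
    by (auto simp: eventually_at intro!: exI[of _ 1])
  then have "\<forall>\<^sub>F h in at 0.
      norm (G h - (\<Sum>m<n. (deriv ^^ m) G 0 / fact m * h ^ m)) \<le> B / fact n * norm (h ^ n)"
    by eventually_elim (rule remainder)
  then show ?thesis
    by (rule bigoI)
qed

lemma bigo_at_0_reflect:
  assumes "R \<in> O[at 0](\<lambda>h. h ^ n)"
  shows "(\<lambda>h. R (- h)) \<in> O[at (0 :: real)](\<lambda>h. h ^ n)"
proof -
  have "filterlim uminus (at 0) (at (0 :: real))"
    by (simp add: filterlim_def filtermap_at_minus)
  from landau_o.big.compose[OF assms this]
  have "(\<lambda>h. R (- h)) \<in> O[at 0](\<lambda>h. (- h) ^ n)" .
  moreover have "(\<lambda>h. (- h) ^ n) = (\<lambda>h. (- 1) ^ n * h ^ n :: real)"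
    by (rule ext) (metis mult_minus1 power_mult_distrib)
  ultimately have "(\<lambda>h. R (- h)) \<in> O[at 0](\<lambda>h. (- 1) ^ n * h ^ n)"
    by (simp only:)
  then show ?thesis
    by simp
qed

lemma real_smooth_odd_part_bigo:
  assumes "real_smooth G"
  shows "(\<lambda>h. G h - G (- h) - (2 * deriv G 0 * h + (deriv ^^ 3) G 0 / 3 * h ^ 3))
    \<in> O[at 0](\<lambda>h. h ^ 5)"
proof -
  define R where "R h = G h - (\<Sum>m<5. (deriv ^^ m) G 0 / fact m * h ^ m)" for h
  have R: "R \<in> O[at 0](\<lambda>h. h ^ 5)"
    unfolding R_def by (rule real_smooth_taylor_bigo[OF assms])
  have "G h - G (- h) - (2 * deriv G 0 * h + (deriv ^^ 3) G 0 / 3 * h ^ 3) = R h - R (- h)" for h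
    unfolding R_def by (simp add: eval_nat_numeral fact_numeral algebra_simps)
  moreover have "(\<lambda>h. R h - R (- h)) \<in> O[at 0](\<lambda>h. h ^ 5)"
    using R bigo_at_0_reflect[OF R] by (rule sum_in_bigo)
  ultimately show ?thesis
    by simp
qed

lemma real_smooth_even_part_bigo:
  assumes "real_smooth G"
  shows "(\<lambda>h. G h + G (- h) - (2 * G 0 + (deriv ^^ 2) G 0 * h ^ 2 + (deriv ^^ 4) G 0 / 12 * h ^ 4))
    \<in> O[at 0](\<lambda>h. h ^ 5)"
proof -
  define R where "R h = G h - (\<Sum>m<5. (deriv ^^ m) G 0 / fact m * h ^ m)" for h
  have R: "R \<in> O[at 0](\<lambda>h. h ^ 5)"
    unfolding R_def by (rule real_smooth_taylor_bigo[OF assms])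
  have "G h + G (- h) - (2 * G 0 + (deriv ^^ 2) G 0 * h ^ 2 + (deriv ^^ 4) G 0 / 12 * h ^ 4)
      = R h + R (- h)" for h
    unfolding R_def by (simp add: eval_nat_numeral fact_numeral algebra_simps)
  moreover have "(\<lambda>h. R h + R (- h)) \<in> O[at 0](\<lambda>h. h ^ 5)"
    using R bigo_at_0_reflect[OF R] by (rule sum_in_bigo)
  ultimately show ?thesis
    by simp
qed

lemma conservative_difference_expansion:
  assumes "real_smooth A" and "real_smooth P" and "P 0 = 0" and "(deriv ^^ 2) P 0 = 0"
    and "\<forall>\<^sub>F h in at_right 0. h * E h = A h - A (- h) - (P h + P (- h)) / 2"
  shows "(\<lambda>h. E h - (2 * deriv A 0 + (deriv ^^ 3) A 0 / 3 * h ^ 2 - (deriv ^^ 4) P 0 / 24 * h ^ 3))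
    \<in> O[at_right 0](\<lambda>h. h ^ 4)"
    (is "?err \<in> _")
proof -
  let ?odd = "\<lambda>h. A h - A (- h) - (2 * deriv A 0 * h + (deriv ^^ 3) A 0 / 3 * h ^ 3)"
  let ?even = "\<lambda>h. P h + P (- h) - (2 * P 0 + (deriv ^^ 2) P 0 * h ^ 2 + (deriv ^^ 4) P 0 / 12 * h ^ 4)"
  have "(\<lambda>h. ?even h / 2) \<in> O[at 0](\<lambda>h. h ^ 5)"
    using real_smooth_even_part_bigo[OF assms(2)] by simp
  with real_smooth_odd_part_bigo[OF assms(1)]
  have "(\<lambda>h. ?odd h - ?even h / 2) \<in> O[at 0](\<lambda>h. h ^ 5)"
    by (rule sum_in_bigo(2))
  then have "(\<lambda>h. ?odd h - ?even h / 2) \<in> O[at_right 0](\<lambda>h. h ^ 5)"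
    by (rule landau_o.big.filter_mono[OF at_within_le_at])
  moreover have "\<forall>\<^sub>F h in at_right 0. ?odd h - ?even h / 2 = ?err h * h"
    using assms(5) by eventually_elim (simp add: assms(3,4) field_simps power2_eq_square power3_eq_cube power4_eq_xxxx)
  moreover have "(\<lambda>h. h ^ 5) = (\<lambda>h. h ^ 4 * h :: real)"
    by (rule ext) (simp add: eval_nat_numeral)
  ultimately have "(\<lambda>h. ?err h * h) \<in> O[at_right 0](\<lambda>h. h ^ 4 * h)"
    by (simp add: landau_o.big.in_cong)
  moreover have nonzero: "\<forall>\<^sub>F h in at_right 0. h \<noteq> (0 :: real)"
    using eventually_at_right_less[of "0 :: real"] by eventually_elim simp
  ultimately have "(\<lambda>h. ?err h * h / h) \<in> O[at_right 0](\<lambda>h. h ^ 4)"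
    by (subst landau_o.big.divide_eq2)
  moreover have "\<forall>\<^sub>F h in at_right 0. ?err h * h / h = ?err h"
    using nonzero by eventually_elim simp
  ultimately show ?thesis
    by (simp add: landau_o.big.in_cong)
qed

lemma cubic_remainder_bigo:
  fixes E :: "real \<Rightarrow> real"
  assumes "(\<lambda>h. E h - (c + K * h ^ 3)) \<in> O[at_right 0](\<lambda>h. h ^ 4)"
  shows "(\<lambda>h. E h - c) \<in> O[at_right 0](\<lambda>h. h ^ 3)"
proof -
  have "(\<lambda>h. h ^ 4) \<in> O[at_right 0](\<lambda>h. h ^ 3 :: real)"
    by real_asymp
  with assms have "(\<lambda>h. E h - (c + K * h ^ 3)) \<in> O[at_right 0](\<lambda>h. h ^ 3)"
    by (rule landau_o.big_trans)
  moreover have "(\<lambda>h. K * h ^ 3) \<in> O[at_right 0](\<lambda>h. h ^ 3)"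
    by (intro bigoI[where c = "\<bar>K\<bar>"] always_eventually) (simp add: abs_mult)
  ultimately have "(\<lambda>h. (E h - (c + K * h ^ 3)) + K * h ^ 3) \<in> O[at_right 0](\<lambda>h. h ^ 3)"
    by (rule sum_in_bigo)
  then show ?thesis
    by simp
qed

lemma symmetric_diagonal_deriv:
  assumes sym: "\<And>a b. G (a, b) = G (b, a)"
    and G: "(G has_derivative L) (at (w x, w x))" and w: "(w has_real_derivative w') (at x)"
  shows "deriv (\<lambda>y. G (w y, w y)) x = 2 * deriv (\<lambda>t. G (w x, w (x + t))) 0"
proof -
  have "((\<lambda>p. (snd p, fst p)) has_derivative (\<lambda>v. (snd v, fst v))) (at p)" for p :: "real \<times> real"
    by (auto intro!: derivative_eq_intros)
  then have "((\<lambda>p. G (snd p, fst p)) has_derivative (\<lambda>v. L (snd v, fst v))) (at (w x, w x))"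
    using has_derivative_compose[of "\<lambda>p. (snd p, fst p)" "\<lambda>v. (snd v, fst v)" "(w x, w x)" UNIV G L] G
    by simp
  moreover have "(\<lambda>p. G (snd p, fst p)) = G"
    using sym by (simp add: case_prod_unfold)
  ultimately have "(G has_derivative (\<lambda>v. L (snd v, fst v))) (at (w x, w x))"
    by simp
  then have "(\<lambda>v. L (snd v, fst v)) = L"
    using G by (rule has_derivative_unique)
  then have L_sym: "L (1, 0) = L (0, 1)"
    by (metis fst_conv snd_conv)
  have "((\<lambda>y. G (w y, w y)) has_real_derivative w' * L (1, 0) + w' * L (0, 1)) (at x)"
    using G w w by (rule has_real_derivative_pair_comp)
  moreover have "((\<lambda>t. x + t) has_real_derivative 1) (at 0)"
    by (auto intro!: derivative_eq_intros)
  with w have "((\<lambda>t. w (x + t)) has_real_derivative w') (at 0)"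
    using DERIV_chain2[of w w' "\<lambda>t. x + t" 0 1] by simp
  then have "((\<lambda>t. G (w x, w (x + t))) has_real_derivative 0 * L (1, 0) + w' * L (0, 1)) (at 0)"
    using G by (intro has_real_derivative_pair_comp) auto
  ultimately show ?thesis
    using L_sym by (simp add: DERIV_imp_deriv)
qed

section \<open>The QFSR flux\<close>

text \<open>For the stencil a, b, c, d = u_{j-1}, u_j, u_k, u_{k+1} and \<kappa>3 = 0, the reconstructed
  states are u_L = b + kappa_incr \<kappa> a b c and u_R = c + kappa_incr \<kappa> d c b.\<close>

definition kappa_incr :: "real \<Rightarrow> real \<Rightarrow> real \<Rightarrow> real \<Rightarrow> real" where
  "kappa_incr \<kappa> a b c = \<kappa> / 2 * (c - b) + (1 - \<kappa>) / 4 * (c - a)"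

definition quad_flux :: "real \<Rightarrow> (real \<Rightarrow> real) \<Rightarrow> real \<Rightarrow> real \<Rightarrow> real" where
  "quad_flux \<theta>2 f v \<delta> = f v + deriv f v * \<delta> + \<theta>2 / 2 * deriv (deriv f) v * \<delta>\<^sup>2"

definition face_avg ::
  "real \<Rightarrow> real \<Rightarrow> (real \<Rightarrow> real) \<Rightarrow> real \<Rightarrow> real \<Rightarrow> real \<Rightarrow> real \<Rightarrow> real" where
  "face_avg \<kappa> \<theta>2 f a b c d =
    (quad_flux \<theta>2 f b (kappa_incr \<kappa> a b c) + quad_flux \<theta>2 f c (kappa_incr \<kappa> d c b)) / 2"

definition face_jump :: "real \<Rightarrow> real \<Rightarrow> real \<Rightarrow> real \<Rightarrow> real \<Rightarrow> real" where
  "face_jump \<kappa> a b c d = (c + kappa_incr \<kappa> d c b) - (b + kappa_incr \<kappa> a b c)"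

lemma qfsr_flux_stencil:
  assumes "h \<noteq> 0"
  shows "qfsr_flux \<kappa> 0 \<theta>2 f Dbar h u y =
    face_avg \<kappa> \<theta>2 f (u (y - h)) (u y) (u (y + h)) (u (y + 2 * h))
    - Dbar (u y, u (y + h)) / 2 * face_jump \<kappa> (u (y - h)) (u y) (u (y + h)) (u (y + 2 * h))"
proof -
  have "y + h + h = y + 2 * h" and "y + h - h = y"
    by simp_all
  with assms have halves: "h / 2 * cdx h u y = (u (y + h) - u (y - h)) / 4"
    "h / 2 * cdx h u (y + h) = (u (y + 2 * h) - u y) / 4"
    unfolding cdx_def by (simp_all only:) (simp_all add: field_simps)
  show ?thesis
    unfolding qfsr_flux_def Let_def face_avg_def face_jump_def quad_flux_def kappa_incr_def
    by (simp only: halves mult_zero_left add_0_right) (simp add: field_simps power2_eq_square)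
qed

lemma face_avg_reverse: "face_avg \<kappa> \<theta>2 f d c b a = face_avg \<kappa> \<theta>2 f a b c d"
  by (simp add: face_avg_def)

lemma face_jump_reverse: "face_jump \<kappa> d c b a = - face_jump \<kappa> a b c d"
  by (simp add: face_jump_def)

definition central_flux ::
  "real \<Rightarrow> real \<Rightarrow> (real \<Rightarrow> real) \<Rightarrow> (real \<Rightarrow> real) \<Rightarrow> real \<Rightarrow> real \<Rightarrow> real" where
  "central_flux \<kappa> \<theta>2 f u x h =
    face_avg \<kappa> \<theta>2 f (node u x (-1) h) (u x) (node u x 1 h) (node u x 2 h)"

definition stencil_jump :: "real \<Rightarrow> (real \<Rightarrow> real) \<Rightarrow> real \<Rightarrow> real \<Rightarrow> real" where
  "stencil_jump \<kappa> u x h = face_jump \<kappa> (node u x (-1) h) (u x) (node u x 1 h) (node u x 2 h)"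

definition dissipation ::
  "real \<Rightarrow> (real \<times> real \<Rightarrow> real) \<Rightarrow> (real \<Rightarrow> real) \<Rightarrow> real \<Rightarrow> real \<Rightarrow> real" where
  "dissipation \<kappa> Dbar u x h = Dbar (u x, u (x + h)) * stencil_jump \<kappa> u x h"

lemma qfsr_err_central_dissipation:
  assumes "h \<noteq> 0" and "\<And>a b. Dbar (a, b) = Dbar (b, a)"
  shows "h * qfsr_err \<kappa> 0 \<theta>2 f Dbar u x h =
    central_flux \<kappa> \<theta>2 f u x h - central_flux \<kappa> \<theta>2 f u x (- h)
    - (dissipation \<kappa> Dbar u x h + dissipation \<kappa> Dbar u x (- h)) / 2"
proof -
  have right: "qfsr_flux \<kappa> 0 \<theta>2 f Dbar h u x =
      central_flux \<kappa> \<theta>2 f u x h - dissipation \<kappa> Dbar u x h / 2"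
    using qfsr_flux_stencil[OF assms(1)]
    by (simp add: central_flux_def dissipation_def stencil_jump_def node_def)
  txt \<open>The face left of \<open>x\<close> is the face right of \<open>x\<close> read backwards with mesh size \<open>-h\<close>.\<close>
  have "x - h - h = x - 2 * h" and "x - h + h = x" and "x - h + 2 * h = x + h"
    by simp_all
  with qfsr_flux_stencil[OF assms(1), of \<kappa> \<theta>2 f Dbar u "x - h"]
  have "qfsr_flux \<kappa> 0 \<theta>2 f Dbar h u (x - h) =
      face_avg \<kappa> \<theta>2 f (u (x - 2 * h)) (u (x - h)) (u x) (u (x + h))
      - Dbar (u (x - h), u x) / 2 * face_jump \<kappa> (u (x - 2 * h)) (u (x - h)) (u x) (u (x + h))"
    by (simp only:)
  also have "\<dots> = central_flux \<kappa> \<theta>2 f u x (- h) + dissipation \<kappa> Dbar u x (- h) / 2"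
    by (simp add: central_flux_def dissipation_def stencil_jump_def node_def
        face_avg_reverse[of \<kappa> \<theta>2 f "u (x - 2 * h)"] face_jump_reverse[of \<kappa> "u (x - 2 * h)"]
        assms(2)[of "u (x - h)"])
  finally have left: "qfsr_flux \<kappa> 0 \<theta>2 f Dbar h u (x - h) =
      central_flux \<kappa> \<theta>2 f u x (- h) + dissipation \<kappa> Dbar u x (- h) / 2" .
  show ?thesis
    using assms(1) by (simp add: qfsr_err_def right left field_simps)
qed

lemma real_smooth_central_flux:
  "real_smooth f \<Longrightarrow> real_smooth u \<Longrightarrow> real_smooth (central_flux \<kappa> \<theta>2 f u x)"
  unfolding central_flux_def[abs_def] face_avg_def quad_flux_def kappa_incr_def
  by (simp add: power2_eq_square)

lemma real_smooth_weighted_jump: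
  "real_smooth g \<Longrightarrow> real_smooth u \<Longrightarrow> real_smooth (\<lambda>h. g h * stencil_jump \<kappa> u x h)"
  unfolding stencil_jump_def face_jump_def kappa_incr_def
  by simp

lemma central_flux_derivs_0:
  assumes "real_smooth f" and "real_smooth u"
  shows "deriv (central_flux \<kappa> \<theta>2 f u x) 0 = deriv f (u x) * deriv u x / 2"
    and "(deriv ^^ 3) (central_flux \<kappa> \<theta>2 f u x) 0 =
      3 / 4 * ((\<kappa> - 1/3) * deriv f (u x) * (deriv ^^ 3) u x
        + (\<kappa> + \<theta>2 - 1) * (deriv ^^ 2) f (u x) * deriv u x * (deriv ^^ 2) u x
        + 1/2 * (\<theta>2 - 2/3) * (deriv ^^ 3) f (u x) * (deriv u x)^3)"
  using assms
  unfolding central_flux_def[abs_def] face_avg_def quad_flux_def kappa_incr_def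
  by (simp_all add: power2_eq_square deriv_smooth_simps eval_nat_numeral)
     (simp_all add: field_simps)

lemma weighted_jump_derivs_0:
  assumes "real_smooth g" and "real_smooth u"
  shows "g 0 * stencil_jump \<kappa> u x 0 = 0"
    and "(deriv ^^ 2) (\<lambda>h. g h * stencil_jump \<kappa> u x h) 0 = 0"
    and "(deriv ^^ 4) (\<lambda>h. g h * stencil_jump \<kappa> u x h) 0 =
      3 * (\<kappa> - 1) * (2 * deriv g 0 * (deriv ^^ 3) u x + g 0 * (deriv ^^ 4) u x)"
  using assms
  unfolding stencil_jump_def face_jump_def kappa_incr_def
  by (simp_all add: deriv_smooth_simps eval_nat_numeral)
     (simp_all add: field_simps)

lemma real_smooth_Dbar_along:
  assumes "smooth_fun Dbar" and "real_smooth u"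
  shows "real_smooth (\<lambda>h. Dbar (u x, u (x + h)))"
  using smooth_fun_pair_comp[OF assms(1) real_smooth_const real_smooth_node[OF assms(2), of x 1]]
  by (simp add: node_def)

lemma real_smooth_dissipation:
  "smooth_fun Dbar \<Longrightarrow> real_smooth u \<Longrightarrow> real_smooth (dissipation \<kappa> Dbar u x)"
  unfolding dissipation_def[abs_def] by (intro real_smooth_weighted_jump real_smooth_Dbar_along)

lemma dissipation_derivs_0:
  assumes "smooth_fun Dbar" and "real_smooth u"
    and sym: "\<And>a b. Dbar (a, b) = Dbar (b, a)" and diag: "\<And>v. Dbar (v, v) = D v"
  shows "dissipation \<kappa> Dbar u x 0 = 0"
    and "(deriv ^^ 2) (dissipation \<kappa> Dbar u x) 0 = 0"
    and "(deriv ^^ 4) (dissipation \<kappa> Dbar u x) 0 =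
      3 * (\<kappa> - 1) * (deriv (\<lambda>y. D (u y)) x * (deriv ^^ 3) u x + D (u x) * (deriv ^^ 4) u x)"
proof -
  obtain L where "(Dbar has_derivative L) (at (u x, u x))"
    using assms(1) unfolding smooth_fun_def by (metis Ck.simps(2))
  from symmetric_diagonal_deriv[OF sym this real_smooth_DERIV[OF assms(2)]]
  have D_x: "deriv (\<lambda>y. D (u y)) x = 2 * deriv (\<lambda>h. Dbar (u x, u (x + h))) 0"
    by (simp add: diag)
  note derivs = weighted_jump_derivs_0[OF real_smooth_Dbar_along[OF assms(1,2)] assms(2), of x \<kappa>]
  show "dissipation \<kappa> Dbar u x 0 = 0"
    using derivs(1) by (simp add: dissipation_def)
  show "(deriv ^^ 2) (dissipation \<kappa> Dbar u x) 0 = 0"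
    using derivs(2) by (simp add: dissipation_def[abs_def])
  show "(deriv ^^ 4) (dissipation \<kappa> Dbar u x) 0 =
      3 * (\<kappa> - 1) * (deriv (\<lambda>y. D (u y)) x * (deriv ^^ 3) u x + D (u x) * (deriv ^^ 4) u x)"
    using derivs(3) by (simp add: dissipation_def[abs_def] D_x diag)
qed

lemma qfsr_err_expansion:
  assumes "smooth_fun u" and "smooth_fun f" and "smooth_fun Dbar"
    and sym: "\<And>a b. Dbar (a, b) = Dbar (b, a)" and diag: "\<And>v. Dbar (v, v) = D v"
  shows "(\<lambda>h. qfsr_err \<kappa> 0 \<theta>2 f Dbar u x h
           - ( deriv f (u x) * deriv u x
             + 1/4 * ( (\<kappa> - 1/3) * deriv f (u x) * (deriv ^^ 3) u x
                     + (\<kappa> + \<theta>2 - 1) * (deriv ^^ 2) f (u x) * deriv u x * (deriv ^^ 2) u x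
                     + 1/2 * (\<theta>2 - 2/3) * (deriv ^^ 3) f (u x) * (deriv u x)^3 ) * h^2
             - (\<kappa> - 1) / 8 * ( deriv (\<lambda>y. D (u y)) x * (deriv ^^ 3) u x
                                + D (u x) * (deriv ^^ 4) u x ) * h^3 ))
         \<in> O[at_right 0](\<lambda>h. h^4)"
    (is "(\<lambda>h. _ - ?T h) \<in> _")
proof -
  have u: "real_smooth u"
    using assms(1) by (rule smooth_fun_imp_real_smooth)
  have f: "real_smooth f"
    using assms(2) by (rule smooth_fun_imp_real_smooth)
  let ?A = "central_flux \<kappa> \<theta>2 f u x" and ?P = "dissipation \<kappa> Dbar u x"
  have "\<forall>\<^sub>F h in at_right 0. h * qfsr_err \<kappa> 0 \<theta>2 f Dbar u x h = ?A h - ?A (- h) - (?P h + ?P (- h)) / 2"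
    using eventually_at_right_less[of "0 :: real"]
    by eventually_elim (simp add: qfsr_err_central_dissipation sym)
  from conservative_difference_expansion[OF real_smooth_central_flux[OF f u]
      real_smooth_dissipation[OF assms(3) u] dissipation_derivs_0(1,2)[OF assms(3) u sym diag] this]
  have "(\<lambda>h. qfsr_err \<kappa> 0 \<theta>2 f Dbar u x h
      - (2 * deriv ?A 0 + (deriv ^^ 3) ?A 0 / 3 * h ^ 2 - (deriv ^^ 4) ?P 0 / 24 * h ^ 3))
      \<in> O[at_right 0](\<lambda>h. h ^ 4)" .
  moreover have "2 * deriv ?A 0 + (deriv ^^ 3) ?A 0 / 3 * h ^ 2 - (deriv ^^ 4) ?P 0 / 24 * h ^ 3 = ?T h" for h
    by (simp add: central_flux_derivs_0[OF f u] dissipation_derivs_0(3)[OF assms(3) u sym diag])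
       (simp add: field_simps)
  ultimately show ?thesis
    by simp
qed

theorem mainTheorem6:
  fixes u f D :: "real \<Rightarrow> real" and Dbar :: "real \<times> real \<Rightarrow> real"
    and \<kappa> \<kappa>3 \<theta>2 x :: real
  assumes "smooth_fun u" and "smooth_fun f" and "smooth_fun D" and "smooth_fun Dbar"
    and "\<And>a b. Dbar (a, b) = Dbar (b, a)"
    and "\<And>v. Dbar (v, v) = D v"
    and "\<kappa>3 = 0"
  shows "(\<lambda>h. qfsr_err \<kappa> \<kappa>3 \<theta>2 f Dbar u x h
           - ( deriv f (u x) * deriv u x
             + 1/4 * ( (\<kappa> - 1/3) * deriv f (u x) * (deriv ^^ 3) u x
                     + (\<kappa> + \<theta>2 - 1) * (deriv ^^ 2) f (u x) * deriv u x * (deriv ^^ 2) u x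
                     + 1/2 * (\<theta>2 - 2/3) * (deriv ^^ 3) f (u x) * (deriv u x)^3 ) * h^2
             - (\<kappa> - 1) / 8 * ( deriv (\<lambda>y. D (u y)) x * (deriv ^^ 3) u x
                                + D (u x) * (deriv ^^ 4) u x ) * h^3 ))
         \<in> O[at_right 0](\<lambda>h. h^4)
       \<and> (\<kappa> = 1/3 \<and> \<theta>2 = 2/3 \<longrightarrow>
          (\<lambda>h. qfsr_err \<kappa> \<kappa>3 \<theta>2 f Dbar u x h - deriv f (u x) * deriv u x)
            \<in> O[at_right 0](\<lambda>h. h^3))"
    (is "?expansion \<and> (_ \<longrightarrow> ?third_order)")
proof (intro conjI impI)
  show ?expansion
    unfolding assms(7) by (rule qfsr_err_expansion[OF assms(1,2,4,5,6)])
  assume "\<kappa> = 1/3 \<and> \<theta>2 = 2/3"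
  then have \<kappa>: "\<kappa> = 1/3" and \<theta>2: "\<theta>2 = 2/3"
    by simp_all
  from \<open>?expansion\<close> show ?third_order
    by (intro cubic_remainder_bigo[where K = "(deriv (\<lambda>y. D (u y)) x * (deriv ^^ 3) u x
        + D (u x) * (deriv ^^ 4) u x) / 12"]) (simp add: \<kappa> \<theta>2 algebra_simps add_divide_distrib)
qed

end
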